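(* Let $P$ be a shrub on a finite set $I$ with at least two elements. Then $P$ has a leaf or two distinct correlated vertices.
   Context: A shrub $P$ on a finite set $I$ is a set $E$ of edges (unordered pairs $\{i,j\}$ of distinct elements of $I$) together with a height function $h_P:I\to\mathbb{N}$. Say that $j$ covers $i$ if $\{i,j\}\in E$ and $h_P(j)=h_P(i)+1$. The axioms are: (1) if $\{i,j\}\in E$ then $h_P(i)=h_P(j)\pm 1$; (2) if $h_P(j)>0$ then there is an edge $\{i,j\}$ with $h_P(i)=h_P(j)-1$; (3) there are no four distinct vertices $a,b,c,d$ such that $a$ covers $b$ and $c$, $c$ covers $d$, and $\{b,d\}\notin E$; (4) there are no five distinct vertices $a,b,c,d,e$ such that $a$ covers $c$ and $d$, $b$ covers $d$ and $e$, $\{a,e\}\notin E$ and $\{b,c\}\notin E$. A leaf is a vertex that covers exactly one vertex and is covered by no vertex. Two vertices $i,j$ are correlated if the set of vertices covering $i$ equals the set of vertices covering $j$, and the set of vertices covered by $i$ equals the set of vertices covered by $j$. *)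

theory Defs
  imports Main
begin

text \<open>A shrub on a finite set I: an edge set E of unordered pairs of distinct
elements of I, and a height function h (only its values on I matter).\<close>

definition covers :: "'a set set \<Rightarrow> ('a \<Rightarrow> nat) \<Rightarrow> 'a \<Rightarrow> 'a \<Rightarrow> bool" where
  "covers E h j i \<longleftrightarrow> {i, j} \<in> E \<and> h j = h i + 1"

definition shrub :: "'a set \<Rightarrow> 'a set set \<Rightarrow> ('a \<Rightarrow> nat) \<Rightarrow> bool" where
  "shrub I E h \<longleftrightarrow>
     finite I \<and>
     (\<forall>e\<in>E. \<exists>i j. e = {i, j} \<and> i \<noteq> j \<and> i \<in> I \<and> j \<in> I) \<and>
     (\<forall>i\<in>I. \<forall>j\<in>I. {i, j} \<in> E \<longrightarrow> h i = h j + 1 \<or> h j = h i + 1) \<and>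
     (\<forall>j\<in>I. h j > 0 \<longrightarrow> (\<exists>i\<in>I. {i, j} \<in> E \<and> h i + 1 = h j)) \<and>
     (\<not> (\<exists>a\<in>I. \<exists>b\<in>I. \<exists>c\<in>I. \<exists>d\<in>I. distinct [a, b, c, d] \<and>
          covers E h a b \<and> covers E h a c \<and> covers E h c d \<and> {b, d} \<notin> E)) \<and>
     (\<not> (\<exists>a\<in>I. \<exists>b\<in>I. \<exists>c\<in>I. \<exists>d\<in>I. \<exists>e\<in>I. distinct [a, b, c, d, e] \<and>
          covers E h a c \<and> covers E h a d \<and> covers E h b d \<and> covers E h b e \<and>
          {a, e} \<notin> E \<and> {b, c} \<notin> E))"

definition leaf :: "'a set \<Rightarrow> 'a set set \<Rightarrow> ('a \<Rightarrow> nat) \<Rightarrow> 'a \<Rightarrow> bool" where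
  "leaf I E h i \<longleftrightarrow> i \<in> I \<and> card {k \<in> I. covers E h i k} = 1 \<and>
     \<not> (\<exists>k\<in>I. covers E h k i)"

definition correlated :: "'a set \<Rightarrow> 'a set set \<Rightarrow> ('a \<Rightarrow> nat) \<Rightarrow> 'a \<Rightarrow> 'a \<Rightarrow> bool" where
  "correlated I E h i j \<longleftrightarrow>
     {k \<in> I. covers E h k i} = {k \<in> I. covers E h k j} \<and>
     {k \<in> I. covers E h i k} = {k \<in> I. covers E h j k}"

end

theory Submission
  imports Defs
begin

text \<open>Pick a vertex \<open>a\<close> of maximal height whose set of lower covers is as small as possible.
If \<open>a\<close> covers nothing, all heights are 0 and any two vertices are correlated; if it covers
exactly one vertex it is a leaf. Otherwise any two vertices \<open>x \<noteq> y\<close> covered by \<open>a\<close> are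
correlated: axiom (3) makes their lower covers agree, and axiom (4) shows that a vertex
covering \<open>x\<close> but not \<open>y\<close> would have strictly fewer lower covers than \<open>a\<close>.\<close>

definition lower_covers :: "'a set \<Rightarrow> 'a set set \<Rightarrow> ('a \<Rightarrow> nat) \<Rightarrow> 'a \<Rightarrow> 'a set" where
  "lower_covers I E h x = {k \<in> I. covers E h x k}"

definition upper_covers :: "'a set \<Rightarrow> 'a set set \<Rightarrow> ('a \<Rightarrow> nat) \<Rightarrow> 'a \<Rightarrow> 'a set" where
  "upper_covers I E h x = {k \<in> I. covers E h k x}"

lemma correlated_iff_covers_eq:
  "correlated I E h i j \<longleftrightarrow>
     upper_covers I E h i = upper_covers I E h j \<and> lower_covers I E h i = lower_covers I E h j"
  unfolding correlated_def lower_covers_def upper_covers_def ..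

lemma covers_iff_edge:
  "covers E h x y \<longleftrightarrow> {x, y} \<in> E \<and> h x = h y + 1"
  unfolding covers_def by (auto simp: insert_commute)

lemma finite_lower_covers: "shrub I E h \<Longrightarrow> finite (lower_covers I E h x)"
  unfolding shrub_def lower_covers_def by auto

lemma shrub_lower_covers_nonempty:
  assumes "shrub I E h" "x \<in> I" "h x > 0"
  shows "lower_covers I E h x \<noteq> {}"
proof -
  obtain i where "i \<in> I" "{i, x} \<in> E" "h i + 1 = h x"
    using assms unfolding shrub_def by blast
  then have "i \<in> lower_covers I E h x"
    unfolding lower_covers_def covers_iff_edge by (auto simp: insert_commute)
  then show ?thesis by blast
qed

lemma lower_covers_subset_of_siblings:
  assumes "shrub I E h" "a \<in> I"
    and x: "x \<in> lower_covers I E h a" and y: "y \<in> lower_covers I E h a"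
  shows "lower_covers I E h x \<subseteq> lower_covers I E h y"
proof
  fix d assume d: "d \<in> lower_covers I E h x"
  show "d \<in> lower_covers I E h y"
  proof (cases "x = y")
    case False
    have "\<not> (distinct [a, y, x, d] \<and> covers E h a y \<and> covers E h a x \<and> covers E h x d
             \<and> {y, d} \<notin> E)"
      using assms d unfolding shrub_def lower_covers_def by blast
    moreover have "distinct [a, y, x, d]" "h y = h d + 1"
      using x y d False unfolding lower_covers_def covers_def by auto
    ultimately show ?thesis
      using x y d unfolding lower_covers_def covers_iff_edge by auto
  qed (use d in simp)
qed

text \<open>Axiom (4) with \<open>(a, b, c, d, e) := (a, b, y, x, e)\<close>, for \<open>e\<close> a lower cover of \<open>b\<close> not below \<open>a\<close>.\<close>

lemma lower_covers_subset_if_not_covering_sibling: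
  assumes "shrub I E h" "a \<in> I"
    and x: "x \<in> lower_covers I E h a" and y: "y \<in> lower_covers I E h a"
    and b: "b \<in> upper_covers I E h x" and y_not_below_b: "y \<notin> lower_covers I E h b"
  shows "lower_covers I E h b \<subseteq> lower_covers I E h a"
proof
  fix e assume e: "e \<in> lower_covers I E h b"
  show "e \<in> lower_covers I E h a"
  proof (rule ccontr)
    assume ea: "e \<notin> lower_covers I E h a"
    have hb: "h b = h a"
      using x b unfolding lower_covers_def upper_covers_def covers_def by auto
    have "{a, e} \<notin> E"
      using ea e hb unfolding lower_covers_def covers_iff_edge by auto
    moreover have "distinct [a, b, y, x, e]"
      using x y b y_not_below_b e ea hb unfolding lower_covers_def upper_covers_def covers_def by auto
    moreover have "\<not> (distinct [a, b, y, x, e] \<and> covers E h a y \<and> covers E h a x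
        \<and> covers E h b x \<and> covers E h b e \<and> {a, e} \<notin> E \<and> {b, y} \<notin> E)"
      using assms e unfolding shrub_def lower_covers_def upper_covers_def by blast
    ultimately have "{b, y} \<in> E"
      using x y b e unfolding lower_covers_def upper_covers_def by auto
    moreover have "y \<in> I" "h b = h y + 1"
      using x y b unfolding lower_covers_def upper_covers_def covers_def by auto
    ultimately show False
      using y_not_below_b unfolding lower_covers_def covers_iff_edge by simp
  qed
qed

lemma siblings_correlated:
  assumes "shrub I E h" "a \<in> I"
    and minimal: "\<forall>b\<in>I. h b = h a \<longrightarrow> \<not> lower_covers I E h b \<subset> lower_covers I E h a"
    and x: "x \<in> lower_covers I E h a" and y: "y \<in> lower_covers I E h a"
  shows "correlated I E h x y"
proof -
  have upper_subset: "upper_covers I E h u \<subseteq> upper_covers I E h v"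
    if u: "u \<in> lower_covers I E h a" and v: "v \<in> lower_covers I E h a" for u v
  proof
    fix b assume b: "b \<in> upper_covers I E h u"
    have "b \<in> I" "h b = h a"
      using u b unfolding lower_covers_def upper_covers_def covers_def by auto
    show "b \<in> upper_covers I E h v"
    proof (rule ccontr)
      assume "b \<notin> upper_covers I E h v"
      then have "v \<notin> lower_covers I E h b"
        using \<open>b \<in> I\<close> unfolding lower_covers_def upper_covers_def by auto
      then have "lower_covers I E h b \<subset> lower_covers I E h a"
        using lower_covers_subset_if_not_covering_sibling[OF assms(1,2) u v b] v by blast
      then show False using minimal \<open>b \<in> I\<close> \<open>h b = h a\<close> by blast
    qed
  qed
  show ?thesis
    unfolding correlated_iff_covers_eq
    using upper_subset[OF x y] upper_subset[OF y x]
      lower_covers_subset_of_siblings[OF assms(1,2) x y]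
      lower_covers_subset_of_siblings[OF assms(1,2) y x]
    by blast
qed

lemma leaf_if_single_lower_cover:
  assumes "a \<in> I" "card (lower_covers I E h a) = 1" "\<forall>k\<in>I. h k \<le> h a"
  shows "leaf I E h a"
  using assms unfolding leaf_def lower_covers_def covers_def by fastforce

lemma correlated_if_flat:
  assumes "\<forall>k\<in>I. h k = 0" "i \<in> I" "j \<in> I"
  shows "correlated I E h i j"
  using assms unfolding correlated_def covers_def by fastforce

lemma finite_empty_or_card_one_or_two_elements:
  assumes "finite A"
  obtains "A = {}" | "card A = 1" | x y where "x \<in> A" "y \<in> A" "x \<noteq> y"
proof (cases "card A \<le> Suc 0")
  case True
  then show ?thesis using that(1,2) assms by (metis card_0_eq le_SucE le_zero_eq One_nat_def)
next
  case False
  then show ?thesis using that(3) card_le_Suc0_iff_eq[OF assms] by blast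
qed

lemma obtain_highest_with_minimal_set:
  fixes h :: "'a \<Rightarrow> nat" and S :: "'a \<Rightarrow> 'b set"
  assumes "finite I" "I \<noteq> {}" "\<And>x. finite (S x)"
  obtains a where "a \<in> I" "\<forall>k\<in>I. h k \<le> h a" "\<forall>b\<in>I. h b = h a \<longrightarrow> \<not> S b \<subset> S a"
proof -
  define T where "T = {x \<in> I. h x = Max (h ` I)}"
  have "Max (h ` I) \<in> h ` I" using assms(1,2) by simp
  then obtain m where "m \<in> T" unfolding T_def by auto
  then obtain a where "a \<in> T" and a_min: "\<And>b. b \<in> T \<Longrightarrow> card (S a) \<le> card (S b)"
    using ex_has_least_nat[of "\<lambda>x. x \<in> T" m "\<lambda>x. card (S x)"] by blast
  have "a \<in> I" "\<forall>k\<in>I. h k \<le> h a"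
    using \<open>a \<in> T\<close> assms(1) unfolding T_def by auto
  moreover have "\<not> S b \<subset> S a" if "b \<in> I" "h b = h a" for b
  proof
    assume "S b \<subset> S a"
    then have "card (S b) < card (S a)" using assms(3) by (rule psubset_card_mono[rotated])
    moreover have "card (S a) \<le> card (S b)"
      using a_min that \<open>a \<in> T\<close> unfolding T_def by simp
    ultimately show False by linarith
  qed
  ultimately show ?thesis using that by blast
qed

theorem mainTheorem3:
  fixes I :: "'a set" and E :: "'a set set" and h :: "'a \<Rightarrow> nat"
  assumes "shrub I E h" and "card I \<ge> 2"
  shows "(\<exists>i. leaf I E h i) \<or>
         (\<exists>i\<in>I. \<exists>j\<in>I. i \<noteq> j \<and> correlated I E h i j)"
proof -
  have "finite I" using assms(1) unfolding shrub_def by blast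
  moreover have "I \<noteq> {}" using assms(2) by auto
  ultimately obtain a where "a \<in> I" and top: "\<forall>k\<in>I. h k \<le> h a"
    and minimal: "\<forall>b\<in>I. h b = h a \<longrightarrow> \<not> lower_covers I E h b \<subset> lower_covers I E h a"
    using obtain_highest_with_minimal_set finite_lower_covers[OF assms(1)] by metis
  from finite_lower_covers[OF assms(1), of a] show ?thesis
  proof (cases rule: finite_empty_or_card_one_or_two_elements)
    case 1
    then have "h a = 0" using shrub_lower_covers_nonempty[OF assms(1) \<open>a \<in> I\<close>] by blast
    then have flat: "\<forall>k\<in>I. h k = 0" using top by (metis le_zero_eq)
    obtain i j where "i \<in> I" "j \<in> I" "i \<noteq> j"
      using assms(2) card_le_Suc0_iff_eq[OF \<open>finite I\<close>] by (metis not_less_eq_eq numeral_2_eq_2)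
    then show ?thesis using correlated_if_flat[OF flat \<open>i \<in> I\<close> \<open>j \<in> I\<close>] by blast
  next
    case 2
    then show ?thesis using leaf_if_single_lower_cover[OF \<open>a \<in> I\<close> 2] top by blast
  next
    case (3 x y)
    moreover from 3 have "x \<in> I" "y \<in> I" unfolding lower_covers_def by auto
    ultimately show ?thesis using siblings_correlated[OF assms(1) \<open>a \<in> I\<close>] minimal by blast
  qed
qed

end
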